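(* Let $G$ be an $m\times n$ XOR non-local game with no zero rows, with marginal row biases $c_1,\dots,c_m$. A vector strategy $\{u_i\},\{v_j\}$ for $G$ is optimal if and only if $\sum_jG_{ij}v_j=c_iu_i$ for all $1\le i\le m$.
   Context: An $m\times n$ XOR non-local game has real cost matrix $G$ with $\sum|G_{ij}|=1$. A vector strategy is a pair of families of unit vectors $u_1,\dots,u_m$, $v_1,\dots,v_n$ in some $\mathbb{R}^N$, with bias $\sum G_{ij}u_i\cdot v_j$; the maximum bias is the quantum success bias $\varepsilon_q(G)$, and a vector strategy is optimal if it attains it. The $i$-th marginal row bias $c_i\ge0$ is the common value of $\sum_jG_{ij}u_i\cdot v_j$ over all optimal vector strategies (this value does not depend on the optimal strategy). *)

theory Defs
  imports "HOL-Analysis.Analysis"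
begin

definition xor_game :: "nat \<Rightarrow> nat \<Rightarrow> (nat \<Rightarrow> nat \<Rightarrow> real) \<Rightarrow> bool" where
  "xor_game m n G \<longleftrightarrow> (\<Sum>i<m. \<Sum>j<n. \<bar>G i j\<bar>) = 1"

definition no_zero_rows :: "nat \<Rightarrow> nat \<Rightarrow> (nat \<Rightarrow> nat \<Rightarrow> real) \<Rightarrow> bool" where
  "no_zero_rows m n G \<longleftrightarrow> (\<forall>i<m. \<exists>j<n. G i j \<noteq> 0)"

definition vec_strategy :: "nat \<Rightarrow> nat \<Rightarrow> (nat \<Rightarrow> 'a::real_inner) \<Rightarrow> (nat \<Rightarrow> 'a) \<Rightarrow> bool" where
  "vec_strategy m n u v \<longleftrightarrow> (\<forall>i<m. norm (u i) = 1) \<and> (\<forall>j<n. norm (v j) = 1)"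

definition bias :: "nat \<Rightarrow> nat \<Rightarrow> (nat \<Rightarrow> nat \<Rightarrow> real) \<Rightarrow> (nat \<Rightarrow> 'a::real_inner) \<Rightarrow> (nat \<Rightarrow> 'a) \<Rightarrow> real" where
  "bias m n G u v = (\<Sum>i<m. \<Sum>j<n. G i j * (u i \<bullet> v j))"

text \<open>Coordinate model of R^N for arbitrary N: vectors are functions nat \<Rightarrow> real,
  only coordinates k < N matter.\<close>
definition dinner :: "nat \<Rightarrow> (nat \<Rightarrow> real) \<Rightarrow> (nat \<Rightarrow> real) \<Rightarrow> real" where
  "dinner N x y = (\<Sum>k<N. x k * y k)"

definition coord_strategy :: "nat \<Rightarrow> nat \<Rightarrow> nat \<Rightarrow> (nat \<Rightarrow> nat \<Rightarrow> real) \<Rightarrow> (nat \<Rightarrow> nat \<Rightarrow> real) \<Rightarrow> bool" where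
  "coord_strategy N m n u v \<longleftrightarrow> (\<forall>i<m. dinner N (u i) (u i) = 1) \<and> (\<forall>j<n. dinner N (v j) (v j) = 1)"

definition coord_bias :: "nat \<Rightarrow> nat \<Rightarrow> nat \<Rightarrow> (nat \<Rightarrow> nat \<Rightarrow> real) \<Rightarrow> (nat \<Rightarrow> nat \<Rightarrow> real) \<Rightarrow> (nat \<Rightarrow> nat \<Rightarrow> real) \<Rightarrow> real" where
  "coord_bias N m n G u v = (\<Sum>i<m. \<Sum>j<n. G i j * dinner N (u i) (v j))"

definition quantum_bias :: "nat \<Rightarrow> nat \<Rightarrow> (nat \<Rightarrow> nat \<Rightarrow> real) \<Rightarrow> real" where
  "quantum_bias m n G = Sup {coord_bias N m n G u v | N u v. coord_strategy N m n u v}"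

definition optimal_strategy :: "nat \<Rightarrow> nat \<Rightarrow> (nat \<Rightarrow> nat \<Rightarrow> real) \<Rightarrow> (nat \<Rightarrow> 'a::real_inner) \<Rightarrow> (nat \<Rightarrow> 'a) \<Rightarrow> bool" where
  "optimal_strategy m n G u v \<longleftrightarrow> vec_strategy m n u v \<and> bias m n G u v = quantum_bias m n G"

text \<open>Marginal row bias c_i: the value of sum_j G_ij u_i.v_j for an optimal strategy
  (the paper shows it does not depend on the optimal strategy chosen).\<close>
definition marginal_row_bias :: "nat \<Rightarrow> nat \<Rightarrow> (nat \<Rightarrow> nat \<Rightarrow> real) \<Rightarrow> nat \<Rightarrow> real" where
  "marginal_row_bias m n G i = (SOME c. \<exists>N u v. coord_strategy N m n u v \<and>
      coord_bias N m n G u v = quantum_bias m n G \<and> c = (\<Sum>j<n. G i j * dinner N (u i) (v j)))"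

end

theory Submission
  imports Defs
begin

text \<open>Write \<open>w\<^sub>i = \<Sum>\<^sub>j G\<^sub>i\<^sub>j v\<^sub>j\<close>, so that the bias is \<open>\<Sum>\<^sub>i u\<^sub>i \<bullet> w\<^sub>i\<close>. The bias only
  depends on the Gram matrix of the \<open>m + n\<close> vectors, so Gram--Schmidt compresses every strategy
  into dimension \<open>m + n\<close>, and compactness there shows that the quantum bias is attained.
  In an optimal strategy \<open>u\<^sub>i\<close> maximises \<open>u \<bullet> w\<^sub>i\<close> over unit vectors \<open>u\<close>, hence
  \<open>(u\<^sub>i \<bullet> w\<^sub>i)\<^sup>2 = |w\<^sub>i|\<^sup>2\<close>, i.e. \<open>w\<^sub>i = (u\<^sub>i \<bullet> w\<^sub>i) u\<^sub>i\<close>. Joining two optimal strategies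
  orthogonally (scaled by \<open>1 / sqrt 2\<close>) gives a third one whose row biases are the averages
  \<open>(a + b) / 2\<close> and whose \<open>|w\<^sub>i|\<^sup>2\<close> are the averages \<open>(a\<^sup>2 + b\<^sup>2) / 2\<close>; so \<open>a = b\<close>, and
  \<open>c\<^sub>i = u\<^sub>i \<bullet> w\<^sub>i\<close> for every optimal strategy. Conversely, if \<open>w\<^sub>i = c\<^sub>i u\<^sub>i\<close> for all \<open>i\<close> then
  the bias is \<open>\<Sum>\<^sub>i c\<^sub>i\<close>, the bias of an optimal strategy.\<close>

lemma dinner_commute: "dinner N x y = dinner N y x"
  by (simp add: dinner_def mult.commute)

lemma dinner_self_nonneg: "0 \<le> dinner N x x"
  by (simp add: dinner_def sum_nonneg)

lemma dinner_self_eq_0_iff: "dinner N x x = 0 \<longleftrightarrow> (\<forall>k<N. x k = 0)"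
  by (auto simp: dinner_def sum_nonneg_eq_0_iff)

lemma dinner_cong:
  "(\<And>k. k < N \<Longrightarrow> x k = x' k) \<Longrightarrow> (\<And>k. k < N \<Longrightarrow> y k = y' k) \<Longrightarrow>
    dinner N x y = dinner N x' y'"
  by (simp add: dinner_def)

lemma dinner_eq_0_if_self_eq_0: "dinner N x x = 0 \<Longrightarrow> dinner N x y = 0"
  unfolding dinner_self_eq_0_iff by (simp add: dinner_def)

lemma dinner_divide_right: "dinner N x (\<lambda>k. y k / c) = dinner N x y / c"
  by (simp add: dinner_def sum_divide_distrib)

lemma dinner_mult_right: "dinner N x (\<lambda>k. c * y k) = c * dinner N x y"
  by (simp add: dinner_def sum_distrib_left algebra_simps)

lemma dinner_diff_mult:
  "dinner N (\<lambda>k. x k - a * z k) (\<lambda>k. y k - b * z k)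
     = dinner N x y - b * dinner N x z - a * dinner N y z + a * b * dinner N z z"
  by (simp add: dinner_def sum_subtractf sum.distrib sum_distrib_left algebra_simps)

lemma dinner_Suc_case_nat: "dinner (Suc K) (case_nat a x) (case_nat b y) = a * b + dinner K x y"
  unfolding dinner_def sum.lessThan_Suc_shift by simp

lemma square_coord_le_dinner: "k < N \<Longrightarrow> (x k)\<^sup>2 \<le> dinner N x x"
  unfolding dinner_def power2_eq_square by (rule member_le_sum) auto

lemma dinner_Cauchy_Schwarz: "(dinner N x y)\<^sup>2 \<le> dinner N x x * dinner N y y"
  using Cauchy_Schwarz_ineq_sum[of x y "{..<N}"] by (simp add: dinner_def power2_eq_square)

lemma abs_dinner_le_1: "dinner N x x = 1 \<Longrightarrow> dinner N y y = 1 \<Longrightarrow> \<bar>dinner N x y\<bar> \<le> 1"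
  using dinner_Cauchy_Schwarz[of N x y] by (simp add: abs_square_le_1)

definition lincomb :: "nat \<Rightarrow> (nat \<Rightarrow> real) \<Rightarrow> (nat \<Rightarrow> nat \<Rightarrow> real) \<Rightarrow> nat \<Rightarrow> real" where
  "lincomb n c v = (\<lambda>k. \<Sum>j<n. c j * v j k)"

lemma dinner_lincomb_right: "dinner N x (lincomb n c v) = (\<Sum>j<n. c j * dinner N x (v j))"
  by (simp add: dinner_def lincomb_def sum_distrib_left sum.swap[of _ "{..<n}"] algebra_simps)

lemma coord_bias_eq_sum_rows:
  "coord_bias N m n G u v = (\<Sum>i<m. dinner N (u i) (lincomb n (G i) v))"
  by (simp add: coord_bias_def dinner_lincomb_right)

lemma coord_bias_le_sum_abs:
  assumes "coord_strategy N m n u v"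
  shows "coord_bias N m n G u v \<le> (\<Sum>i<m. \<Sum>j<n. \<bar>G i j\<bar>)"
  unfolding coord_bias_def
proof (intro sum_mono)
  fix i j assume "i \<in> {..<m}" "j \<in> {..<n}"
  then have "\<bar>dinner N (u i) (v j)\<bar> \<le> 1"
    using assms abs_dinner_le_1 by (simp add: coord_strategy_def)
  then have "\<bar>G i j\<bar> * \<bar>dinner N (u i) (v j)\<bar> \<le> \<bar>G i j\<bar>"
    by (simp add: mult_left_le)
  then show "G i j * dinner N (u i) (v j) \<le> \<bar>G i j\<bar>"
    by (metis abs_ge_self abs_mult order_trans)
qed

lemma coord_bias_le_quantum_bias:
  assumes "coord_strategy N m n u v"
  shows "coord_bias N m n G u v \<le> quantum_bias m n G"
  unfolding quantum_bias_def
proof (rule cSup_upper)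
  show "bdd_above {coord_bias N m n G u v | N u v. coord_strategy N m n u v}"
    using coord_bias_le_sum_abs by (fastforce simp: bdd_above_def)
qed (use assms in blast)

lemma quantum_bias_le:
  assumes "\<And>N u v. coord_strategy N m n u v \<Longrightarrow> coord_bias N m n G u v \<le> b"
  shows "quantum_bias m n G \<le> b"
  unfolding quantum_bias_def
proof (rule cSup_least)
  have "coord_strategy 1 m n (\<lambda>_ _. 1) (\<lambda>_ _. 1)"
    by (simp add: coord_strategy_def dinner_def)
  then show "{coord_bias N m n G u v | N u v. coord_strategy N m n u v} \<noteq> {}"
    by blast
qed (use assms in blast)

text \<open>\<open>c a\<close> is the component of \<open>x a\<close> along \<open>x 0\<close> and \<open>r a\<close> the orthogonal remainder.\<close>

lemma gram_schmidt_step: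
  obtains c :: "nat \<Rightarrow> real" and r :: "nat \<Rightarrow> nat \<Rightarrow> real"
  where "\<And>a b. dinner N (x a) (x b) = c a * c b + dinner N (r a) (r b)"
    and "\<And>y. dinner N (r 0) y = 0"
proof -
  define s where "s = sqrt (dinner N (x 0) (x 0))"
  define e where "e = (\<lambda>k. x 0 k / s)"
  define c where "c a = dinner N (x a) e" for a
  define r where "r a = (\<lambda>k. x a k - c a * e k)" for a
  have ss: "s * s = dinner N (x 0) (x 0)"
    by (simp add: s_def dinner_self_nonneg)
  have c0: "c 0 = s"
  proof (cases "s = 0")
    case True
    then show ?thesis by (simp add: c_def e_def dinner_def)
  next
    case False
    then show ?thesis by (simp add: c_def e_def dinner_divide_right flip: ss)
  qed
  \<comment> \<open>If \<open>x 0\<close> vanishes then \<open>s = 0\<close>, so \<open>e = 0\<close> (division by zero) and all \<open>c a = 0\<close>.\<close>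
  have ee: "c a * c b * dinner N e e = c a * c b" for a b
  proof (cases "s = 0")
    case True
    then show ?thesis by (simp add: c_def e_def dinner_def)
  next
    case False
    have "dinner N e e = dinner N (x 0) (x 0) / (s * s)"
      by (simp add: e_def dinner_def sum_divide_distrib)
    also have "\<dots> = 1"
      using False by (simp flip: ss)
    finally show ?thesis by simp
  qed
  have rr: "dinner N (x a) (x b) = c a * c b + dinner N (r a) (r b)" for a b
    using dinner_diff_mult[of N "x a" "c a" e "x b" "c b"] ee[of a b]
    by (simp add: r_def flip: c_def)
  have "dinner N (r 0) (r 0) = 0"
    using rr[of 0 0] c0 ss by simp
  then have "dinner N (r 0) y = 0" for y
    by (rule dinner_eq_0_if_self_eq_0)
  with rr show thesis by (rule that)
qed

lemma gram_realization: "\<exists>y. \<forall>a<K. \<forall>b<K. dinner K (y a) (y b) = dinner N (x a) (x b)"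
proof (induction K arbitrary: x)
  case 0
  show ?case by simp
next
  case (Suc K)
  obtain c r where x_split: "\<And>a b. dinner N (x a) (x b) = c a * c b + dinner N (r a) (r b)"
    and r0: "\<And>y. dinner N (r 0) y = 0"
    using gram_schmidt_step[of N x] by blast
  obtain y where y: "\<forall>a<K. \<forall>b<K. dinner K (y a) (y b) = dinner N (r (Suc a)) (r (Suc b))"
    using Suc.IH[of "\<lambda>a. r (Suc a)"] by blast
  have r0': "dinner N y (r 0) = 0" for y
    by (subst dinner_commute) (rule r0)
  define z where "z = case_nat (\<lambda>_. 0) y"
  have z0: "dinner K (z 0) w = 0" "dinner K w (z 0) = 0" for w
    by (simp_all add: z_def dinner_def)
  have z: "dinner K (z a) (z b) = dinner N (r a) (r b)" if "a < Suc K" "b < Suc K" for a b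
  proof (cases "a = 0 \<or> b = 0")
    case True
    then show ?thesis by (auto simp: z0 r0 r0')
  next
    case False
    then obtain a' b' where "a = Suc a'" "b = Suc b'"
      by (metis not0_implies_Suc)
    with that y show ?thesis by (simp add: z_def)
  qed
  have "dinner (Suc K) (case_nat (c a) (z a)) (case_nat (c b) (z b)) = dinner N (x a) (x b)"
    if "a < Suc K" "b < Suc K" for a b
    by (simp add: dinner_Suc_case_nat z[OF that] x_split)
  then show ?case
    by (intro exI[of _ "\<lambda>a. case_nat (c a) (z a)"]) simp
qed

text \<open>A family of \<open>D\<close> unit vectors of \<open>\<real>\<^sup>D\<close>, packed into a single point of the product
  space \<open>nat \<times> nat \<Rightarrow> real\<close> so that compactness arguments apply.\<close>

definition unit_families :: "nat \<Rightarrow> (nat \<times> nat \<Rightarrow> real) set" where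
  "unit_families D = PiE UNIV (\<lambda>(a, k). if a < D \<and> k < D then {-1..1} else {0})
     \<inter> (\<Inter>a<D. {z. dinner D (\<lambda>k. z (a, k)) (\<lambda>k. z (a, k)) = 1})"

lemma continuous_on_dinner_rows [continuous_intros]:
  "continuous_on S (\<lambda>z::nat \<times> nat \<Rightarrow> real. dinner D (\<lambda>k. z (a, k)) (\<lambda>k. z (b, k)))"
  unfolding dinner_def
  by (intro continuous_intros continuous_on_subset[OF continuous_on_product_coordinates] subset_UNIV)

lemma compact_unit_families: "compact (unit_families D)"
proof -
  have "compactin (product_topology (\<lambda>_. euclidean) UNIV)
      (PiE UNIV (\<lambda>(a, k). if a < D \<and> k < D then {-1..1::real} else {0}))"
    by (auto simp: compactin_PiE split: if_splits)
  then show ?thesis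
    unfolding unit_families_def euclidean_product_topology
    by (intro compact_Int_closed closed_INT ballI closed_Collect_eq continuous_intros) simp_all
qed

lemma unit_family_strategy:
  assumes "z \<in> unit_families (m + n)"
  shows "coord_strategy (m + n) m n (\<lambda>i k. z (i, k)) (\<lambda>j k. z (m + j, k))"
  using assms by (auto simp: coord_strategy_def unit_families_def)

lemma coord_strategy_compress:
  assumes st: "coord_strategy N m n u v"
  obtains z where "z \<in> unit_families (m + n)"
    and "coord_bias (m + n) m n G (\<lambda>i k. z (i, k)) (\<lambda>j k. z (m + j, k)) = coord_bias N m n G u v"
proof -
  define D where "D = m + n"
  define x where "x a = (if a < m then u a else v (a - m))" for a
  obtain y where y: "\<forall>a<D. \<forall>b<D. dinner D (y a) (y b) = dinner N (x a) (x b)"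
    using gram_realization by blast
  define z where "z = (\<lambda>(a, k). if a < D \<and> k < D then y a k else 0)"
  have dz: "dinner D (\<lambda>k. z (a, k)) (\<lambda>k. z (b, k)) = dinner N (x a) (x b)"
    if "a < D" "b < D" for a b
    using y that by (simp add: z_def dinner_def)
  have unit: "dinner N (x a) (x a) = 1" if "a < D" for a
    using st that by (simp add: x_def coord_strategy_def D_def)
  have "\<bar>y a k\<bar> \<le> 1" if "a < D" "k < D" for a k
    using square_coord_le_dinner[of k D "y a"] y unit that by (simp add: abs_square_le_1)
  then have "z \<in> unit_families D"
    using dz unit by (force simp: unit_families_def z_def abs_le_iff)
  moreover have "coord_bias D m n G (\<lambda>i k. z (i, k)) (\<lambda>j k. z (m + j, k)) = coord_bias N m n G u v"
    unfolding coord_bias_def using dz by (simp add: D_def x_def)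
  ultimately show thesis
    using that unfolding D_def by blast
qed

lemma quantum_bias_attained:
  obtains N u v where "coord_strategy N m n u v" and "coord_bias N m n G u v = quantum_bias m n G"
proof -
  define F where "F z = coord_bias (m + n) m n G (\<lambda>i k. z (i, k)) (\<lambda>j k. z (m + j, k))" for z
  have "(\<lambda>(a, k). if a < m + n \<and> k = 0 then 1 else 0) \<in> unit_families (m + n)"
    by (auto simp: unit_families_def dinner_def if_distrib cong: if_cong)
  moreover have "continuous_on (unit_families (m + n)) F"
    unfolding F_def coord_bias_def by (intro continuous_intros)
  ultimately obtain z where z: "z \<in> unit_families (m + n)"
    and z_max: "\<And>z'. z' \<in> unit_families (m + n) \<Longrightarrow> F z' \<le> F z"
    using continuous_attains_sup[OF compact_unit_families] by blast
  have "quantum_bias m n G \<le> F z"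
  proof (rule quantum_bias_le)
    fix N u v assume "coord_strategy N m n u v"
    then obtain z' where "z' \<in> unit_families (m + n)" "F z' = coord_bias N m n G u v"
      by (rule coord_strategy_compress) (simp add: F_def)
    with z_max show "coord_bias N m n G u v \<le> F z" by metis
  qed
  moreover have "F z \<le> quantum_bias m n G"
    unfolding F_def by (rule coord_bias_le_quantum_bias[OF unit_family_strategy[OF z]])
  ultimately show thesis
    using that[OF unit_family_strategy[OF z]] by (simp add: F_def)
qed

lemma coord_bias_fun_upd:
  assumes "i < m"
  shows "coord_bias N m n G (u(i := z)) v = coord_bias N m n G u v
    - dinner N (u i) (lincomb n (G i) v) + dinner N z (lincomb n (G i) v)"
proof -
  have split: "(\<Sum>l<m. f l) = f i + (\<Sum>l\<in>{..<m} - {i}. f l)" for f :: "nat \<Rightarrow> real"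
    using assms by (intro sum.remove) auto
  have "(\<Sum>l\<in>{..<m} - {i}. dinner N ((u(i := z)) l) (lincomb n (G l) v))
      = (\<Sum>l\<in>{..<m} - {i}. dinner N (u l) (lincomb n (G l) v))"
    by (rule sum.cong) auto
  then show ?thesis
    unfolding coord_bias_eq_sum_rows split[of "\<lambda>l. dinner N ((u(i := z)) l) (lincomb n (G l) v)"]
      split[of "\<lambda>l. dinner N (u l) (lincomb n (G l) v)"]
    by simp
qed

lemma optimal_row_maximal:
  assumes st: "coord_strategy N m n u v" and opt: "coord_bias N m n G u v = quantum_bias m n G"
    and i: "i < m" and z: "dinner N z z = 1"
  shows "dinner N z (lincomb n (G i) v) \<le> dinner N (u i) (lincomb n (G i) v)"
proof -
  have "coord_strategy N m n (u(i := z)) v"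
    using st z by (simp add: coord_strategy_def)
  then have "coord_bias N m n G (u(i := z)) v \<le> coord_bias N m n G u v"
    unfolding opt by (rule coord_bias_le_quantum_bias)
  then show ?thesis
    by (simp add: coord_bias_fun_upd[OF i])
qed

lemma optimal_row_bias_squared:
  assumes st: "coord_strategy N m n u v" and opt: "coord_bias N m n G u v = quantum_bias m n G"
    and i: "i < m"
  shows "(dinner N (u i) (lincomb n (G i) v))\<^sup>2 = dinner N (lincomb n (G i) v) (lincomb n (G i) v)"
    (is "?W\<^sup>2 = ?Q")
proof (rule antisym)
  have "dinner N (u i) (u i) = 1"
    using st i by (simp add: coord_strategy_def)
  then show "?W\<^sup>2 \<le> ?Q"
    using dinner_Cauchy_Schwarz[of N "u i"] by simp
  show "?Q \<le> ?W\<^sup>2"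
  proof (cases "?Q = 0")
    case False
    define w where "w = lincomb n (G i) v"
    define r where "r = sqrt ?Q"
    have r: "0 < r" "r * r = ?Q"
      using False dinner_self_nonneg[of N "lincomb n (G i) v"] by (auto simp: r_def)
    \<comment> \<open>Replacing \<open>u i\<close> by the unit vector \<open>w / |w|\<close> cannot increase the bias.\<close>
    have "dinner N (\<lambda>k. w k / r) (\<lambda>k. w k / r) = ?Q / (r * r)"
      by (simp add: dinner_def w_def sum_divide_distrib)
    moreover have "dinner N (\<lambda>k. w k / r) w = ?Q / r"
      by (subst dinner_commute) (simp add: dinner_divide_right w_def)
    ultimately have "dinner N (\<lambda>k. w k / r) (\<lambda>k. w k / r) = 1" "dinner N (\<lambda>k. w k / r) w = r"
      unfolding r(2)[symmetric] using r(1) by simp_all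
    then have "r \<le> ?W"
      using optimal_row_maximal[OF st opt i, of "\<lambda>k. w k / r"] by (simp add: w_def)
    then have "r * r \<le> ?W * ?W"
      using r by (intro mult_mono) auto
    then show ?thesis
      using r by (simp add: power2_eq_square)
  qed simp
qed

lemma optimal_row_lincomb_eq:
  assumes st: "coord_strategy N m n u v" and opt: "coord_bias N m n G u v = quantum_bias m n G"
    and i: "i < m" and k: "k < N"
  shows "lincomb n (G i) v k = dinner N (u i) (lincomb n (G i) v) * u i k"
proof -
  define w where "w = lincomb n (G i) v"
  define W where "W = dinner N (u i) w"
  have "dinner N (u i) (u i) = 1"
    using st i by (simp add: coord_strategy_def)
  then have "dinner N (\<lambda>k. w k - W * u i k) (\<lambda>k. w k - W * u i k) = dinner N w w - W\<^sup>2"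
    by (simp add: dinner_diff_mult dinner_commute[of N w "u i"] W_def power2_eq_square)
  also have "\<dots> = 0"
    using optimal_row_bias_squared[OF st opt i] by (simp add: W_def w_def)
  finally show ?thesis
    using k by (simp add: dinner_self_eq_0_iff W_def w_def)
qed

lemma sum_lessThan_add: "(\<Sum>k<a + b. f k) = (\<Sum>k<a. f k) + (\<Sum>k<b. f (a + k))"
  for f :: "nat \<Rightarrow> 'a::comm_monoid_add"
  by (induction b) (simp_all add: add_ac)

text \<open>The orthogonal sum of \<open>x \<in> \<real>\<^sup>N\<close> and \<open>y\<close>, scaled by \<open>1 / sqrt 2\<close> so that it joins unit
  vectors to a unit vector.\<close>

definition vjoin :: "nat \<Rightarrow> (nat \<Rightarrow> real) \<Rightarrow> (nat \<Rightarrow> real) \<Rightarrow> nat \<Rightarrow> real" where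
  "vjoin N x y = (\<lambda>k. if k < N then x k / sqrt 2 else y (k - N) / sqrt 2)"

lemma dinner_vjoin:
  "dinner (N1 + N2) (vjoin N1 x y) (vjoin N1 x' y') = (dinner N1 x x' + dinner N2 y y') / 2"
proof -
  have "sqrt 2 * sqrt 2 = (2::real)" by simp
  then have "dinner (N1 + N2) (vjoin N1 x y) (vjoin N1 x' y')
      = (\<Sum>k<N1. x k * x' k / 2) + (\<Sum>k<N2. y k * y' k / 2)"
    unfolding dinner_def sum_lessThan_add by (simp add: vjoin_def)
  then show ?thesis
    by (simp add: dinner_def add_divide_distrib flip: sum_divide_distrib)
qed

lemma lincomb_vjoin:
  "lincomb n c (\<lambda>j. vjoin N (x j) (y j)) = vjoin N (lincomb n c x) (lincomb n c y)"
proof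
  fix k
  show "lincomb n c (\<lambda>j. vjoin N (x j) (y j)) k = vjoin N (lincomb n c x) (lincomb n c y) k"
    by (cases "k < N") (simp_all add: lincomb_def vjoin_def sum_divide_distrib)
qed

lemma optimal_row_bias_unique:
  assumes st1: "coord_strategy N1 m n u1 v1" and opt1: "coord_bias N1 m n G u1 v1 = quantum_bias m n G"
    and st2: "coord_strategy N2 m n u2 v2" and opt2: "coord_bias N2 m n G u2 v2 = quantum_bias m n G"
    and i: "i < m"
  shows "dinner N1 (u1 i) (lincomb n (G i) v1) = dinner N2 (u2 i) (lincomb n (G i) v2)"
    (is "?a = ?b")
proof -
  define u where "u a = vjoin N1 (u1 a) (u2 a)" for a
  define v where "v a = vjoin N1 (v1 a) (v2 a)" for a
  have st: "coord_strategy (N1 + N2) m n u v"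
    using st1 st2 by (simp add: coord_strategy_def u_def v_def dinner_vjoin)
  have "coord_bias (N1 + N2) m n G u v = (coord_bias N1 m n G u1 v1 + coord_bias N2 m n G u2 v2) / 2"
    by (simp add: coord_bias_def u_def v_def dinner_vjoin add_divide_distrib sum.distrib
        distrib_left flip: sum_divide_distrib)
  then have opt: "coord_bias (N1 + N2) m n G u v = quantum_bias m n G"
    using opt1 opt2 by simp
  have w: "lincomb n (G i) v = vjoin N1 (lincomb n (G i) v1) (lincomb n (G i) v2)"
    unfolding v_def by (rule lincomb_vjoin)
  have "((?a + ?b) / 2)\<^sup>2 = (?a\<^sup>2 + ?b\<^sup>2) / 2"
    using optimal_row_bias_squared[OF st opt i] optimal_row_bias_squared[OF st1 opt1 i]
      optimal_row_bias_squared[OF st2 opt2 i]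
    by (simp add: w u_def dinner_vjoin)
  then have "(?a - ?b)\<^sup>2 = 0"
    by (simp add: power2_eq_square field_simps)
  then show ?thesis by simp
qed

lemma marginal_row_bias_eq:
  assumes st: "coord_strategy N m n u v" and opt: "coord_bias N m n G u v = quantum_bias m n G"
    and i: "i < m"
  shows "marginal_row_bias m n G i = dinner N (u i) (lincomb n (G i) v)"
proof -
  have "\<exists>c N u v. coord_strategy N m n u v \<and> coord_bias N m n G u v = quantum_bias m n G
      \<and> c = (\<Sum>j<n. G i j * dinner N (u i) (v j))"
    using st opt by blast
  from someI_ex[OF this] obtain N' u' v' where st': "coord_strategy N' m n u' v'"
    and opt': "coord_bias N' m n G u' v' = quantum_bias m n G"
    and c: "marginal_row_bias m n G i = dinner N' (u' i) (lincomb n (G i) v')"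
    by (auto simp: marginal_row_bias_def dinner_lincomb_right)
  show ?thesis
    using c optimal_row_bias_unique[OF st' opt' st opt i] by simp
qed

lemma coord_optimal_iff_lincomb_eq:
  assumes st: "coord_strategy N m n u v"
  shows "coord_bias N m n G u v = quantum_bias m n G \<longleftrightarrow>
    (\<forall>i<m. \<forall>k<N. lincomb n (G i) v k = marginal_row_bias m n G i * u i k)"
proof
  assume "coord_bias N m n G u v = quantum_bias m n G"
  then show "\<forall>i<m. \<forall>k<N. lincomb n (G i) v k = marginal_row_bias m n G i * u i k"
    using optimal_row_lincomb_eq[OF st] marginal_row_bias_eq[OF st] by simp
next
  assume aligned: "\<forall>i<m. \<forall>k<N. lincomb n (G i) v k = marginal_row_bias m n G i * u i k"
  obtain N' u' v' where st': "coord_strategy N' m n u' v'"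
    and opt': "coord_bias N' m n G u' v' = quantum_bias m n G"
    by (rule quantum_bias_attained)
  have "coord_bias N m n G u v = (\<Sum>i<m. marginal_row_bias m n G i * dinner N (u i) (u i))"
    unfolding coord_bias_eq_sum_rows
  proof (intro sum.cong refl)
    fix i assume "i \<in> {..<m}"
    then have "dinner N (u i) (lincomb n (G i) v)
        = dinner N (u i) (\<lambda>k. marginal_row_bias m n G i * u i k)"
      using aligned by (intro dinner_cong) auto
    then show "dinner N (u i) (lincomb n (G i) v) = marginal_row_bias m n G i * dinner N (u i) (u i)"
      by (simp add: dinner_mult_right)
  qed
  also have "\<dots> = (\<Sum>i<m. marginal_row_bias m n G i)"
    using st by (simp add: coord_strategy_def)
  also have "\<dots> = quantum_bias m n G"
    using opt' by (simp add: coord_bias_eq_sum_rows marginal_row_bias_eq[OF st' opt'])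
  finally show "coord_bias N m n G u v = quantum_bias m n G" .
qed

lemma dinner_basis_coords:
  assumes "bij_betw h {..<DIM('a)} (Basis :: 'a::euclidean_space set)"
  shows "dinner DIM('a) (\<lambda>k. x \<bullet> h k) (\<lambda>k. y \<bullet> h k) = x \<bullet> y"
  using sum.reindex_bij_betw[OF assms, of "\<lambda>b. (x \<bullet> b) * (y \<bullet> b)"]
  by (simp add: dinner_def euclidean_inner[of x y])

lemma basis_coords_eq_iff:
  assumes "bij_betw h {..<DIM('a)} (Basis :: 'a::euclidean_space set)"
  shows "(\<forall>k<DIM('a). x \<bullet> h k = y \<bullet> h k) \<longleftrightarrow> x = y"
proof -
  have "h ` {..<DIM('a)} = Basis"
    using assms by (simp add: bij_betw_def)
  then show ?thesis
    by (force simp: euclidean_eq_iff[of x y])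
qed

lemma lincomb_basis_coords:
  "lincomb n c (\<lambda>j k. v j \<bullet> h k) = (\<lambda>k. (\<Sum>j<n. c j *\<^sub>R v j) \<bullet> h k)"
  by (simp add: lincomb_def inner_sum_left)

theorem corollary3p2:
  fixes G :: "nat \<Rightarrow> nat \<Rightarrow> real" and m n :: nat
    and u v :: "nat \<Rightarrow> 'a::euclidean_space"
  assumes "xor_game m n G" and "no_zero_rows m n G"
    and "vec_strategy m n u v"
  shows "optimal_strategy m n G u v \<longleftrightarrow>
    (\<forall>i<m. (\<Sum>j<n. G i j *\<^sub>R v j) = marginal_row_bias m n G i *\<^sub>R u i)"
proof -
  obtain h where h: "bij_betw h {..<DIM('a)} (Basis :: 'a set)"
    using ex_bij_betw_nat_finite[of "Basis :: 'a set"] by (auto simp: atLeast0LessThan)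
  define U where "U = (\<lambda>i k. u i \<bullet> h k)"
  define V where "V = (\<lambda>j k. v j \<bullet> h k)"
  have st: "coord_strategy DIM('a) m n U V"
    using assms(3) by (simp add: coord_strategy_def vec_strategy_def U_def V_def
        dinner_basis_coords[OF h] norm_eq_1)
  have "optimal_strategy m n G u v \<longleftrightarrow> coord_bias DIM('a) m n G U V = quantum_bias m n G"
    using assms(3) by (simp add: optimal_strategy_def bias_def coord_bias_def U_def V_def
        dinner_basis_coords[OF h])
  also have "\<dots> \<longleftrightarrow> (\<forall>i<m. \<forall>k<DIM('a). lincomb n (G i) V k = marginal_row_bias m n G i * U i k)"
    by (rule coord_optimal_iff_lincomb_eq[OF st])
  also have "\<dots> \<longleftrightarrow> (\<forall>i<m. (\<Sum>j<n. G i j *\<^sub>R v j) = marginal_row_bias m n G i *\<^sub>R u i)"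
    by (simp add: U_def V_def lincomb_basis_coords flip: basis_coords_eq_iff[OF h])
  finally show ?thesis .
qed

end
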